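(* Let $[n_1,\dots,n_l]$ be a Hirzebruch-Jung continued fraction (integers $n_j\ge 2$), and put $c_i=-[n_i,n_{i-1},\dots,n_1]$ for $i=1,\dots,l$, so that the rational quadratic form of $L=L_{[n_1,\dots,n_l]}$ is equivalent to $\sum_{i=1}^l c_iX_i^2$. Let $\tau(L)=L_{[2,n_1,\dots,n_{l-1},n_l+1]}$. Then $\tau(L)\otimes\mathbb{Q}$ has an orthogonal basis $v_1,\dots,v_{l+1}$ with $v_i^2=d_i$, where $d_i=c_i$ for $i=1,\dots,l-1$, $d_l=c_l-1$, and $$d_{l+1}=-2-\sum_{j=1}^l\frac{d_j}{(d_1d_2\cdots d_j)^2}=-2+\frac{q_1+q_{1,l}}{q+q_l}.$$ In particular, if $[n_1,\dots,n_l]\in T_6$, then $d_{l+1}\in\bar 2\cdot 3^{\alpha}$ for some positive odd integer $\alpha$.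
   Context: For integers $n_j\ge2$, $L_{[n_1,\dots,n_l]}$ is the lattice with basis $e_1,\dots,e_l$ whose Gram matrix $M(-n_1,\dots,-n_l)$ is tridiagonal with diagonal $-n_1,\dots,-n_l$ and entries $1$ directly above and below the diagonal. $[m_1,\dots,m_k]=m_1-1/(m_2-1/(\cdots-1/m_k))$. $q=|\det M(-n_1,\dots,-n_l)|$, $q_1=|\det M(-n_2,\dots,-n_l)|$, $q_l=|\det M(-n_1,\dots,-n_{l-1})|$, $q_{1,l}=|\det M(-n_2,\dots,-n_{l-1})|$, with determinant of an empty matrix equal to $1$. $T_6$ is the set of such continued fractions equal to $\frac{6n^2}{6na-1}$ for integers $n>a>0$, $\gcd(n,a)=1$. For an integer $\alpha$ and $x\in\{1,2\}$, $\bar x\cdot 3^{\alpha}$ denotes the set of elements $3^{\alpha}u\in\mathbb{Q}_3$ with $u$ a $3$-adic unit congruent to $x$ modulo $3$. *)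

theory Defs
  imports Complex_Main "Jordan_Normal_Form.Determinant" "HOL-Number_Theory.Cong"
begin

text \<open>Hirzebruch-Jung continued fraction [m1,...,mk] = m1 - 1/(m2 - 1/(... - 1/mk)),
  evaluated in the rationals (the empty list is junk and never used).\<close>
fun hjcf :: "int list \<Rightarrow> rat" where
  "hjcf [] = 0"
| "hjcf [m] = of_int m"
| "hjcf (m # m' # ms) = of_int m - 1 / hjcf (m' # ms)"

text \<open>Gram matrix M(-n_1,...,-n_l) of L_[n_1,...,n_l] (0-based indices).\<close>
definition tri_gram :: "int list \<Rightarrow> nat \<Rightarrow> nat \<Rightarrow> int" where
  "tri_gram ns i j = (if i = j then - (ns ! i) else if i = Suc j \<or> j = Suc i then 1 else 0)"

definition tri_mat :: "int list \<Rightarrow> int mat" where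
  "tri_mat ns = mat (length ns) (length ns) (\<lambda>(i, j). tri_gram ns i j)"

definition lat_form :: "int list \<Rightarrow> (nat \<Rightarrow> rat) \<Rightarrow> (nat \<Rightarrow> rat) \<Rightarrow> rat" where
  "lat_form ns x y = (\<Sum>i<length ns. \<Sum>j<length ns. x i * of_int (tri_gram ns i j) * y j)"

definition is_basis_Q :: "nat \<Rightarrow> (nat \<Rightarrow> nat \<Rightarrow> rat) \<Rightarrow> bool" where
  "is_basis_Q k v \<longleftrightarrow>
     (\<forall>c :: nat \<Rightarrow> rat. (\<forall>t<k. (\<Sum>i=1..k. c i * v i t) = 0) \<longrightarrow> (\<forall>i\<in>{1..k}. c i = 0)) \<and>
     (\<forall>w :: nat \<Rightarrow> rat. \<exists>c :: nat \<Rightarrow> rat. \<forall>t<k. w t = (\<Sum>i=1..k. c i * v i t))"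

definition orth_basis :: "int list \<Rightarrow> (nat \<Rightarrow> nat \<Rightarrow> rat) \<Rightarrow> (nat \<Rightarrow> rat) \<Rightarrow> bool" where
  "orth_basis ns v d \<longleftrightarrow> is_basis_Q (length ns) v \<and>
     (\<forall>i\<in>{1..length ns}. \<forall>j\<in>{1..length ns}.
        lat_form ns (v i) (v j) = (if i = j then d i else 0))"

definition tau :: "int list \<Rightarrow> int list" where
  "tau ns = 2 # butlast ns @ [last ns + 1]"

text \<open>q, q_1, q_l, q_{1,l}. For l = 1 the matrix M(-n_2,...,-n_0) is taken to have
  determinant 0 (continuant convention K_{-1} = 0).\<close>
definition qq :: "int list \<Rightarrow> int" where "qq ns = \<bar>det (tri_mat ns)\<bar>"
definition q_1 :: "int list \<Rightarrow> int" where "q_1 ns = \<bar>det (tri_mat (tl ns))\<bar>"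
definition q_l :: "int list \<Rightarrow> int" where "q_l ns = \<bar>det (tri_mat (butlast ns))\<bar>"
definition q_1l :: "int list \<Rightarrow> int" where
  "q_1l ns = (if length ns = 1 then 0 else \<bar>det (tri_mat (butlast (tl ns)))\<bar>)"

definition in_T6 :: "int list \<Rightarrow> bool" where
  "in_T6 ns \<longleftrightarrow> (\<exists>n a :: int. n > a \<and> a > 0 \<and> gcd n a = 1 \<and>
      hjcf ns = of_int (6 * n^2) / of_int (6 * n * a - 1))"

text \<open>y \<in> bar x \<cdot> 3^alpha: y = 3^alpha u with u a 3-adic unit, u \<equiv> x mod 3. For rational y,
  u = r/s with r, s prime to 3 and r \<equiv> x s (mod 3).\<close>
definition bar_3pow :: "int \<Rightarrow> int \<Rightarrow> rat \<Rightarrow> bool" where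
  "bar_3pow x \<alpha> y \<longleftrightarrow> (\<exists>r s :: int. s \<noteq> 0 \<and> \<not> 3 dvd r \<and> \<not> 3 dvd s \<and>
      [r = x * s] (mod 3) \<and> y = (3::rat) powi \<alpha> * of_int r / of_int s)"

end

theory Submission
  imports Defs "HOL-Computational_Algebra.Factorial_Ring"
begin

text \<open>Let \<open>L = L_[t_0,...,t_n]\<close> with all \<open>t_i \<ge> 2\<close>, and let \<open>Z\<close> be the continuants of
  \<open>t_1, t_2, ...\<close> (\<open>Z_0 = 0\<close>, \<open>Z_1 = 1\<close>). Since \<open>Z\<close> solves the three-term recurrence
  of the tridiagonal Gram matrix, the truncation \<open>v_j = (Z_0,...,Z_j,0,...)/Z_j\<close> is killed by the
  rows \<open>1..j-1\<close>; so \<open>v_1,...,v_n\<close> are pairwise orthogonal with \<open>v_j\<^sup>2 = -Z_{j+1}/Z_j\<close>. The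
  solution \<open>y\<close> of the same recurrence with \<open>y_0 = 1\<close> and \<open>y_{n+1} = 0\<close> is killed by all rows
  but row 0, which completes the basis with \<open>y\<^sup>2 = \<rho> - t_0\<close>, \<open>\<rho>\<close> a ratio of continuants. The
  Casoratian identity of the recurrence makes \<open>\<Sum> d_j/(d_1\<cdots>d_j)\<^sup>2\<close> telescope to \<open>-\<rho>\<close>.

  For \<open>\<tau>(L)\<close> the \<open>Z_j\<close> are the continuants of \<open>n_1,...,n_{j-1}\<close>, except that raising \<open>n_l\<close> by
  one adds \<open>Z_l\<close> to \<open>Z_{l+1}\<close>; this identifies the \<open>d_j\<close> and \<open>\<rho> = (q_1 + q_{1,l})/(q + q_l)\<close>.
  If \<open>q/q_1 = 6n\<^sup>2/(6na - 1)\<close>, both fractions are reduced, so \<open>q = 6n\<^sup>2\<close> and \<open>q_1 = 6na - 1\<close>;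
  then \<open>q_l q_1 - q q_{1,l} = 1\<close> with \<open>0 < q_l < q\<close> determines \<open>q_l\<close> and \<open>q_{1,l}\<close>, and
  \<open>d_{l+1} = -6(2n - a)\<^sup>2/(12n\<^sup>2 - 6na - 1)\<close> has odd 3-adic valuation and unit part \<open>\<equiv> 2\<close>.\<close>

fun lin_rec :: "(nat \<Rightarrow> 'a::comm_ring_1) \<Rightarrow> 'a \<Rightarrow> 'a \<Rightarrow> nat \<Rightarrow> 'a" where
  "lin_rec m a b 0 = a"
| "lin_rec m a b (Suc 0) = b"
| "lin_rec m a b (Suc (Suc k)) = m k * lin_rec m a b (Suc k) - lin_rec m a b k"

text \<open>Index shift: \<open>continuant m (Suc k)\<close> is the continuant of \<open>m 0, ..., m (k - 1)\<close>,
  i.e. \<open>(-1)^k det M(-m 0, ..., -m (k - 1))\<close>.\<close>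
abbreviation continuant :: "(nat \<Rightarrow> 'a::comm_ring_1) \<Rightarrow> nat \<Rightarrow> 'a" where
  "continuant m \<equiv> lin_rec m 0 1"

lemma lin_rec_cong:
  "(\<And>i. Suc (Suc i) \<le> k \<Longrightarrow> m i = m' i) \<Longrightarrow> lin_rec m a b k = lin_rec m' a b k"
  by (induction m a b k rule: lin_rec.induct) auto

lemma lin_rec_linear:
  "lin_rec m (s * a + t * a') (s * b + t * b') k = s * lin_rec m a b k + t * lin_rec m a' b' k"
  by (induction m a b k rule: lin_rec.induct) (simp_all add: algebra_simps)

lemma lin_rec_diff: "lin_rec m a b k - lin_rec m a' b' k = lin_rec m (a - a') (b - b') k"
  using lin_rec_linear[of m 1 a "-1" a' b b' k] by simp

lemma lin_rec_Suc_shift: "lin_rec m a b (Suc k) = lin_rec (\<lambda>i. m (Suc i)) b (m 0 * b - a) k"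
  by (induction k rule: induct_nat_012) simp_all

lemma of_int_lin_rec:
  "of_int (lin_rec m a b k) = lin_rec (\<lambda>i. of_int (m i)) (of_int a) (of_int b) k"
  by (induction m a b k rule: lin_rec.induct) simp_all

lemma lin_rec_casoratian:
  "lin_rec m a b k * lin_rec m a' b' (Suc k) - lin_rec m a b (Suc k) * lin_rec m a' b' k
     = a * b' - b * a'"
  by (induction k) (simp_all add: algebra_simps)

lemma lin_rec_incr_last:
  "lin_rec (m(k := m k + 1)) a b (Suc (Suc k)) = lin_rec m a b (Suc (Suc k)) + lin_rec m a b (Suc k)"
proof -
  have "lin_rec (m(k := m k + 1)) a b j = lin_rec m a b j" if "j \<le> Suc k" for j
    by (rule lin_rec_cong) (use that in auto)
  then show ?thesis by (simp add: algebra_simps)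
qed

lemma lin_rec_tail: "lin_rec m (-1) 0 (Suc k) = continuant (\<lambda>i. m (Suc i)) k"
  by (simp add: lin_rec_Suc_shift)

lemma continuant_Suc_Suc:
  "continuant m (Suc (Suc k)) =
     m 0 * continuant (\<lambda>i. m (Suc i)) (Suc k) - continuant (\<lambda>i. m (Suc (Suc i))) k"
proof -
  have "continuant m (Suc (Suc k)) = lin_rec (\<lambda>i. m (Suc i)) 1 (m 0) (Suc k)"
    by (subst lin_rec_Suc_shift) simp
  also have "\<dots> = lin_rec (\<lambda>i. m (Suc i)) 1 0 (Suc k) + m 0 * continuant (\<lambda>i. m (Suc i)) (Suc k)"
    using lin_rec_linear[of "\<lambda>i. m (Suc i)" 1 1 "m 0" 0 0 1 "Suc k"] by simp
  also have "lin_rec (\<lambda>i. m (Suc i)) 1 0 (Suc k) = - lin_rec (\<lambda>i. m (Suc i)) (-1) 0 (Suc k)"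
    using lin_rec_linear[of "\<lambda>i. m (Suc i)" "-1" "-1" 0 0 0 0] by simp
  finally show ?thesis by (simp add: lin_rec_tail)
qed

text \<open>With all coefficients at least 2 the sequence is convex, so its increments never decrease.\<close>
lemma lin_rec_increasing:
  fixes m :: "nat \<Rightarrow> 'a::linordered_idom"
  assumes "\<And>i. Suc (Suc i) \<le> k \<Longrightarrow> m i \<ge> 2" and "0 \<le> a" and "a \<le> b"
  shows "a \<le> lin_rec m a b k \<and> (0 < k \<longrightarrow> lin_rec m a b (k - 1) + (b - a) \<le> lin_rec m a b k)"
  using assms(1)
proof (induction k rule: induct_nat_012)
  case (ge2 k)
  then have ih: "a \<le> lin_rec m a b (Suc k)" "lin_rec m a b k + (b - a) \<le> lin_rec m a b (Suc k)"
    and "m k \<ge> 2" by (auto simp: le_Suc_eq)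
  then have "2 * lin_rec m a b (Suc k) \<le> m k * lin_rec m a b (Suc k)"
    using \<open>0 \<le> a\<close> by (intro mult_right_mono) auto
  then show ?case using ih \<open>a \<le> b\<close> by simp
qed (use assms(3) in simp_all)

lemma continuant_pos:
  fixes m :: "nat \<Rightarrow> 'a::linordered_idom"
  assumes "\<And>i. Suc (Suc i) \<le> k \<Longrightarrow> m i \<ge> 2" and "0 < k"
  shows "0 < continuant m k"
  using lin_rec_increasing[of "k - 1" m 0 1] lin_rec_increasing[of k m 0 1] assms by force

lemma continuant_less_Suc:
  fixes m :: "nat \<Rightarrow> 'a::linordered_idom"
  assumes "\<And>i. Suc (Suc i) \<le> Suc k \<Longrightarrow> m i \<ge> 2"
  shows "continuant m k < continuant m (Suc k)"
  using lin_rec_increasing[of "Suc k" m 0 1] assms by auto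

lemma tri_mat_carrier: "tri_mat xs \<in> carrier_mat (length xs) (length xs)"
  unfolding tri_mat_def by simp

lemma mat_delete_tri_mat_last:
  "length xs = Suc k \<Longrightarrow> mat_delete (tri_mat xs) k k = tri_mat (butlast xs)"
  by (rule eq_matI) (auto simp: mat_delete_def tri_mat_def tri_gram_def nth_butlast)

lemma cofactor_tri_mat_superdiag:
  assumes len: "length xs = Suc (Suc p)"
  shows "cofactor (tri_mat xs) p (Suc p) = - det (tri_mat (butlast (butlast xs)))"
proof -
  define M where "M = mat_delete (tri_mat xs) p (Suc p)"
  have M: "M \<in> carrier_mat (Suc p) (Suc p)"
    using mat_delete_carrier[OF tri_mat_carrier[of xs]] len by (simp add: M_def)
  have last_row: "M $$ (p, j) = (if j = p then 1 else 0)" if "j < Suc p" for j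
    using that len by (auto simp: M_def mat_delete_def tri_mat_def tri_gram_def)
  have del: "mat_delete M p p = tri_mat (butlast (butlast xs))"
    by (rule eq_matI)
      (use len in \<open>auto simp: M_def mat_delete_def tri_mat_def tri_gram_def nth_butlast\<close>)
  have "det M = (\<Sum>j<Suc p. M $$ (p, j) * cofactor M p j)"
    by (rule laplace_expansion_row[OF M]) simp
  also have "\<dots> = det (tri_mat (butlast (butlast xs)))"
    by (simp add: last_row cofactor_def del)
  finally show ?thesis by (simp add: cofactor_def M_def)
qed

lemma det_tri_mat_expand_last:
  assumes len: "length xs = Suc k"
  shows "det (tri_mat xs) = - xs ! k * det (tri_mat (butlast xs))
           - (if k = 0 then 0 else det (tri_mat (butlast (butlast xs))))"
proof -
  let ?A = "tri_mat xs"
  let ?c = "cofactor ?A"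
  have A: "?A \<in> carrier_mat (Suc k) (Suc k)" using tri_mat_carrier[of xs] len by simp
  have "det ?A = (\<Sum>i<Suc k. ?A $$ (i, k) * ?c i k)"
    by (rule laplace_expansion_column[OF A]) simp
  also have "\<dots> = (\<Sum>i<Suc k. (if i = k then - xs ! k * ?c k k else 0) + (if Suc i = k then ?c i k else 0))"
    by (rule sum.cong) (use len in \<open>auto simp: tri_mat_def tri_gram_def\<close>)
  also have "\<dots> = - xs ! k * ?c k k + (if k = 0 then 0 else ?c (k - 1) k)"
    by (cases k) (simp_all add: sum.distrib)
  finally show ?thesis
    using len cofactor_tri_mat_superdiag[of xs "k - 1"]
    by (cases k) (simp_all add: cofactor_def mat_delete_tri_mat_last)
qed

lemma continuant_nth_butlast:
  "j \<le> length (butlast xs) \<Longrightarrow> continuant (nth (butlast xs)) (Suc j) = continuant (nth xs) (Suc j)"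
  by (rule lin_rec_cong) (auto simp: nth_butlast)

lemma det_tri_mat: "det (tri_mat xs) = (-1) ^ length xs * continuant (nth xs) (Suc (length xs))"
proof (induction "length xs" arbitrary: xs rule: less_induct)
  case less
  consider "length xs = 0" | "length xs = 1" | n where "length xs = Suc (Suc n)"
    by (metis One_nat_def not0_implies_Suc)
  then show ?case
  proof cases
    case 1 then show ?thesis using tri_mat_carrier[of xs] by simp
  next
    case 2 then show ?thesis using det_tri_mat_expand_last[of xs 0] tri_mat_carrier[of "butlast xs"] by simp
  next
    case 3
    have "det (tri_mat (butlast xs)) = (-1) ^ Suc n * continuant (nth xs) (Suc (Suc n))"
      using less[of "butlast xs"] continuant_nth_butlast[of "Suc n" xs] 3 by simp
    moreover have "det (tri_mat (butlast (butlast xs))) = (-1) ^ n * continuant (nth xs) (Suc n)"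
      using less[of "butlast (butlast xs)"] 3
        continuant_nth_butlast[of n "butlast xs"] continuant_nth_butlast[of n xs] by simp
    ultimately have "det (tri_mat xs) =
        (-1) ^ n * (xs ! Suc n * continuant (nth xs) (Suc (Suc n)) - continuant (nth xs) (Suc n))"
      using det_tri_mat_expand_last[of xs "Suc n"] 3 by (simp del: lin_rec.simps add: algebra_simps)
    then show ?thesis using 3 by (simp only: lin_rec.simps(3)[of _ _ _ "Suc n"]) simp
  qed
qed

lemma abs_det_tri_mat:
  "\<forall>x\<in>set xs. x \<ge> 2 \<Longrightarrow> \<bar>det (tri_mat xs)\<bar> = continuant (nth xs) (Suc (length xs))"
  using continuant_pos[of "Suc (length xs)" "nth xs"] by (auto simp: det_tri_mat abs_mult)

lemma hjcf_Cons: "xs \<noteq> [] \<Longrightarrow> hjcf (x # xs) = of_int x - 1 / hjcf xs"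
  by (cases xs) auto

lemma hjcf_continuant:
  assumes "xs \<noteq> []" and "\<forall>x\<in>set xs. x \<ge> 2"
  shows "hjcf xs = of_int (continuant (nth xs) (Suc (length xs))) / of_int (continuant (nth (tl xs)) (length xs))"
  using assms
proof (induction xs)
  case (Cons a xs)
  show ?case
  proof (cases "xs = []")
    case False
    have pos: "continuant (nth xs) (Suc (length xs)) > 0"
      by (rule continuant_pos) (use Cons.prems in auto)
    have "(\<lambda>i. xs ! Suc i) = nth (tl xs)"
      using False by (cases xs) auto
    then have "continuant (nth (a # xs)) (Suc (Suc (length xs))) =
        a * continuant (nth xs) (Suc (length xs)) - continuant (nth (tl xs)) (length xs)"
      using continuant_Suc_Suc[of "nth (a # xs)" "length xs"] False by (cases xs) auto
    moreover have "hjcf xs = of_int (continuant (nth xs) (Suc (length xs))) / of_int (continuant (nth (tl xs)) (length xs))"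
      using Cons False by simp
    ultimately show ?thesis
      using pos False by (simp add: hjcf_Cons field_simps flip: of_int_mult of_int_add del: lin_rec.simps)
  qed simp
qed simp

lemma hjcf_rev_take:
  assumes "\<forall>x\<in>set ns. x \<ge> 2" and "1 \<le> j" and "j \<le> length ns"
  shows "hjcf (rev (take j ns)) = of_int (continuant (nth ns) (Suc j)) / of_int (continuant (nth ns) j)"
  using assms(2,3)
proof (induction j rule: dec_induct)
  case base
  then show ?case by (cases ns) auto
next
  case (step k)
  have pos: "continuant (nth ns) (Suc k) > 0"
    by (rule continuant_pos) (use assms(1) step.hyps step.prems in \<open>auto dest: nth_mem\<close>)
  have "rev (take (Suc k) ns) = ns ! k # rev (take k ns)"
    using step.prems by (simp add: take_Suc_conv_app_nth)
  moreover have "rev (take k ns) \<noteq> []" using step.hyps step.prems by (cases ns) auto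
  ultimately show ?case
    using step pos by (simp add: hjcf_Cons field_simps)
qed

definition gram_vec :: "int list \<Rightarrow> (nat \<Rightarrow> rat) \<Rightarrow> nat \<Rightarrow> rat" where
  "gram_vec xs y i = (\<Sum>j<length xs. of_int (tri_gram xs i j) * y j)"

lemma gram_vec_eq:
  assumes "i < length xs"
  shows "gram_vec xs y i = - of_int (xs ! i) * y i + (if 0 < i then y (i - 1) else 0)
                           + (if Suc i < length xs then y (Suc i) else 0)"
proof -
  have "gram_vec xs y i = (\<Sum>j<length xs. (if j = i then - of_int (xs ! i) * y i else 0)
      + (if 0 < i \<and> j = i - 1 then y (i - 1) else 0) + (if Suc i < length xs \<and> j = Suc i then y (Suc i) else 0))"
    unfolding gram_vec_def by (rule sum.cong) (auto simp: tri_gram_def)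
  then show ?thesis using assms by (simp add: sum.distrib)
qed

lemma lat_form_gram_vec: "lat_form xs x y = (\<Sum>i<length xs. x i * gram_vec xs y i)"
  unfolding lat_form_def gram_vec_def by (simp add: sum_distrib_left mult.assoc)

lemma tri_gram_commute: "tri_gram xs i j = tri_gram xs j i"
  unfolding tri_gram_def by auto

lemma lat_form_commute: "lat_form xs x y = lat_form xs y x"
  unfolding lat_form_def
  by (subst sum.swap) (simp add: tri_gram_commute mult.commute mult.left_commute)

lemma lat_form_sum_left:
  "finite I \<Longrightarrow> lat_form xs (\<lambda>s. \<Sum>i\<in>I. c i * f i s) y = (\<Sum>i\<in>I. c i * lat_form xs (f i) y)"
  unfolding lat_form_def by (simp add: sum_distrib_left sum_distrib_right mult.assoc sum.swap[of _ I])

lemma orth_basisI: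
  assumes orth: "\<And>i j. i \<in> {1..length xs} \<Longrightarrow> j \<in> {1..length xs} \<Longrightarrow>
      lat_form xs (v i) (v j) = (if i = j then e i else 0)"
    and nonzero: "\<And>i. i \<in> {1..length xs} \<Longrightarrow> e i \<noteq> 0"
    and span: "\<And>w. \<exists>c. \<forall>t<length xs. w t = (\<Sum>i=1..length xs. c i * v i t)"
  shows "orth_basis xs v e"
  unfolding orth_basis_def is_basis_Q_def
proof (intro conjI allI impI ballI span orth)
  fix c :: "nat \<Rightarrow> rat" and j
  assume zero: "\<forall>t<length xs. (\<Sum>i=1..length xs. c i * v i t) = 0" and j: "j \<in> {1..length xs}"
  have "0 = lat_form xs (\<lambda>s. \<Sum>i\<in>{1..length xs}. c i * v i s) (v j)"
    using zero by (simp add: lat_form_def)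
  also have "\<dots> = (\<Sum>i\<in>{1..length xs}. c i * lat_form xs (v i) (v j))"
    by (rule lat_form_sum_left) simp
  also have "\<dots> = (\<Sum>i\<in>{1..length xs}. if i = j then c j * e j else 0)"
    by (rule sum.cong) (use j orth in auto)
  also have "\<dots> = c j * e j"
    using j by simp
  finally show "c j = 0" using nonzero[OF j] by simp
qed

lemma orth_basis_cong:
  "orth_basis xs v e \<Longrightarrow> (\<And>i. i \<in> {1..length xs} \<Longrightarrow> e i = e' i) \<Longrightarrow> orth_basis xs v e'"
  unfolding orth_basis_def by simp

locale hj_lattice =
  fixes ts :: "int list"
  assumes ts_nonempty: "ts \<noteq> []" and ts_ge2: "\<forall>t\<in>set ts. t \<ge> 2"
begin

definition coeff :: "nat \<Rightarrow> rat" where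
  "coeff k = of_int (ts ! Suc k)"

abbreviation Z :: "nat \<Rightarrow> rat" where
  "Z \<equiv> continuant coeff"

abbreviation W :: "nat \<Rightarrow> rat" where
  "W \<equiv> lin_rec coeff (-1) 0"

definition rho :: rat where
  "rho = W (length ts) / Z (length ts)"

abbreviation y :: "nat \<Rightarrow> rat" where
  "y \<equiv> lin_rec coeff 1 rho"

definition basis_vec :: "nat \<Rightarrow> nat \<Rightarrow> rat" where
  "basis_vec j s = (if j = length ts then y s else if s \<le> j then Z s / Z j else 0)"

definition basis_sq :: "nat \<Rightarrow> rat" where
  "basis_sq j = (if j = length ts then rho - of_int (ts ! 0) else - Z (Suc j) / Z j)"

lemma Z_pos: "0 < k \<Longrightarrow> k \<le> length ts \<Longrightarrow> 0 < Z k"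
  by (rule continuant_pos) (use ts_ge2 in \<open>auto simp: coeff_def\<close>)

lemma Z_Suc: "0 < i \<Longrightarrow> Z (Suc i) = of_int (ts ! i) * Z i - Z (i - 1)"
  by (cases i) (simp_all add: coeff_def)

lemma rho_less_one: "rho < 1"
proof -
  have "1 \<le> lin_rec coeff 1 1 (length ts)"
    using lin_rec_increasing[of "length ts" coeff 1 1] ts_ge2 by (auto simp: coeff_def)
  then have "W (length ts) < Z (length ts)"
    using lin_rec_diff[of coeff 0 1 "length ts" "-1" 0] by simp
  then show ?thesis
    using Z_pos[of "length ts"] ts_nonempty by (simp add: rho_def)
qed

lemma y_eq: "y k = rho * Z k - W k"
  using lin_rec_linear[of coeff rho 0 "-1" "-1" 1 0 k] by simp

lemma y_length: "y (length ts) = 0"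
proof -
  have "rho * Z (length ts) = W (length ts)"
    using Z_pos[of "length ts"] ts_nonempty by (simp add: rho_def)
  then show ?thesis by (simp add: y_eq)
qed

lemma basis_vec_length: "basis_vec (length ts) = y"
  by (simp add: fun_eq_iff basis_vec_def)

lemma gram_vec_lin_rec:
  assumes "0 < i" and "i < length ts"
  shows "gram_vec ts (lin_rec coeff a b) i = (if Suc i < length ts then 0 else - lin_rec coeff a b (Suc i))"
  using assms by (cases i) (simp_all add: gram_vec_eq coeff_def)

lemma gram_vec_y:
  assumes "i < length ts"
  shows "gram_vec ts y i = (if i = 0 then basis_sq (length ts) else 0)"
proof (cases "i = 0")
  case True
  have "(if Suc 0 < length ts then y (Suc 0) else 0) = rho"
  proof (cases "Suc 0 < length ts")
    case False
    then have "length ts = Suc 0" using ts_nonempty by (cases ts) auto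
    then show ?thesis using y_length by simp
  qed simp
  then show ?thesis using True assms by (simp add: gram_vec_eq basis_sq_def)
next
  case False
  then show ?thesis
    using assms gram_vec_lin_rec[of i 1 rho] y_length by (cases "Suc i = length ts") auto
qed

lemma gram_vec_basis_vec:
  assumes "0 < i" and "i \<le> j" and "j < length ts"
  shows "gram_vec ts (basis_vec j) i = (if i = j then basis_sq j else 0)"
proof -
  have "0 < Z j" using Z_pos assms by simp
  moreover have "gram_vec ts (basis_vec j) i =
      (- of_int (ts ! i) * Z i + Z (i - 1) + (if i < j then Z (Suc i) else 0)) / Z j"
    using assms \<open>0 < Z j\<close> by (auto simp: gram_vec_eq basis_vec_def field_simps)
  ultimately show ?thesis
    using assms Z_Suc[of i] by (auto simp: basis_sq_def field_simps)
qed

lemma lat_form_basis_vec_y: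
  assumes "i \<in> {1..length ts}"
  shows "lat_form ts (basis_vec i) y = (if i = length ts then basis_sq i else 0)"
proof -
  have "lat_form ts (basis_vec i) y = (\<Sum>s<length ts. if s = 0 then basis_vec i 0 * basis_sq (length ts) else 0)"
    unfolding lat_form_gram_vec by (rule sum.cong) (simp_all add: gram_vec_y)
  also have "\<dots> = basis_vec i 0 * basis_sq (length ts)"
    using ts_nonempty by simp
  finally show ?thesis using assms by (simp add: basis_vec_def)
qed

lemma lat_form_basis_vec_le:
  assumes "1 \<le> i" and "i \<le> j" and "j < length ts"
  shows "lat_form ts (basis_vec i) (basis_vec j) = (if i = j then basis_sq j else 0)"
proof -
  have "basis_vec i s * gram_vec ts (basis_vec j) s = (if s = j \<and> i = j then basis_sq j else 0)"
    if "s < length ts" for s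
  proof -
    consider "s = 0" | "0 < s" "s \<le> j" | "j < s" by linarith
    then show ?thesis
    proof cases
      case 1
      then show ?thesis using assms by (simp add: basis_vec_def)
    next
      case 2
      have "0 < Z j" using Z_pos assms by simp
      then show ?thesis
        using 2 assms gram_vec_basis_vec[of s j] by (simp add: basis_vec_def)
    next
      case 3
      then show ?thesis using assms by (simp add: basis_vec_def)
    qed
  qed
  then have "lat_form ts (basis_vec i) (basis_vec j) = (\<Sum>s<length ts. if s = j \<and> i = j then basis_sq j else 0)"
    unfolding lat_form_gram_vec by (intro sum.cong) auto
  then show ?thesis using assms by simp
qed

lemma lat_form_basis_vec:
  assumes "i \<in> {1..length ts}" and "j \<in> {1..length ts}"
  shows "lat_form ts (basis_vec i) (basis_vec j) = (if i = j then basis_sq i else 0)"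
proof -
  have le: "lat_form ts (basis_vec i) (basis_vec j) = (if i = j then basis_sq i else 0)"
    if "i \<in> {1..length ts}" "j \<in> {1..length ts}" "i \<le> j" for i j
  proof (cases "j = length ts")
    case True
    then show ?thesis using that lat_form_basis_vec_y[of i] by (simp add: basis_vec_length)
  next
    case False
    then show ?thesis using that lat_form_basis_vec_le[of i j] by simp
  qed
  show ?thesis
  proof (cases "i \<le> j")
    case False
    then have "lat_form ts (basis_vec j) (basis_vec i) = (if j = i then basis_sq j else 0)"
      using le[OF assms(2,1)] by simp
    then show ?thesis using False by (simp add: lat_form_commute)
  qed (use le[OF assms] in simp)
qed

lemma basis_sq_neg:
  assumes "j \<in> {1..length ts}"
  shows "basis_sq j < 0"
proof (cases "j = length ts")
  case True
  have "2 \<le> ts ! 0" using ts_ge2 ts_nonempty by (cases ts) auto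
  then show ?thesis using True rho_less_one by (simp add: basis_sq_def)
next
  case False
  then show ?thesis using assms Z_pos[of j] Z_pos[of "Suc j"] by (simp add: basis_sq_def)
qed

text \<open>The truncations are triangular and vanish at coordinate 0, where \<open>y\<close> is 1, so the
  coefficients of \<open>w\<close> can be solved for explicitly; with \<open>basis_vec i t = Z t / Z i\<close> the
  solution telescopes.\<close>
lemma basis_vec_span: "\<exists>c. \<forall>t<length ts. w t = (\<Sum>i=1..length ts. c i * basis_vec i t)"
proof -
  obtain n where len: "length ts = Suc n" using ts_nonempty by (cases ts) auto
  define u where "u s = w s - w 0 * y s" for s
  define g where "g j = (if j \<le> n then u j / Z j else 0)" for j
  define c where "c i = (if i = Suc n then w 0 else Z i * (g i - g (Suc i)))" for i
  have "w t = (\<Sum>i=1..Suc n. c i * basis_vec i t)" if "t < Suc n" for t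
  proof -
    have "basis_vec (Suc n) = y" using basis_vec_length len by simp
    then have split: "(\<Sum>i=1..Suc n. c i * basis_vec i t) = (\<Sum>i=1..n. c i * basis_vec i t) + w 0 * y t"
      by (simp add: c_def)
    show ?thesis
    proof (cases "t = 0")
      case True
      then have "(\<Sum>i=1..n. c i * basis_vec i t) = 0"
        using len by (intro sum.neutral) (auto simp: basis_vec_def)
      then show ?thesis unfolding split using True by simp
    next
      case False
      then have t: "1 \<le> t" "t \<le> n" using that by auto
      have "(\<Sum>i=1..n. c i * basis_vec i t) = (\<Sum>i=t..n. c i * basis_vec i t)"
        by (rule sum.mono_neutral_right) (use t len in \<open>auto simp: basis_vec_def\<close>)
      also have "\<dots> = (\<Sum>i=t..n. Z t * (g i - g (Suc i)))"
      proof (rule sum.cong)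
        fix i assume "i \<in> {t..n}"
        moreover have "0 < Z i" using Z_pos \<open>i \<in> {t..n}\<close> t len by simp
        ultimately show "c i * basis_vec i t = Z t * (g i - g (Suc i))"
          using len by (auto simp: c_def basis_vec_def)
      qed simp
      also have "\<dots> = Z t * - (\<Sum>i=t..n. g (Suc i) - g i)"
        by (simp add: sum_distrib_left sum_negf[symmetric])
      also have "(\<Sum>i=t..n. g (Suc i) - g i) = g (Suc n) - g t"
        using t by (intro sum_Suc_diff) simp
      also have "Z t * - (g (Suc n) - g t) = u t"
        using t Z_pos[of t] len by (simp add: g_def)
      finally show ?thesis unfolding split by (simp add: u_def)
    qed
  qed
  then show ?thesis using len by (intro exI[of _ c]) simp
qed

theorem orth_basis: "orth_basis ts basis_vec basis_sq"
proof (rule orth_basisI)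
  show "basis_sq i \<noteq> 0" if "i \<in> {1..length ts}" for i
    using basis_sq_neg[OF that] by simp
qed (use lat_form_basis_vec basis_vec_span in simp_all)

lemma prod_basis_sq: "j < length ts \<Longrightarrow> (\<Prod>k=1..j. basis_sq k) = (-1) ^ j * Z (Suc j)"
proof (induction j)
  case (Suc j)
  then show ?case using Z_pos[of "Suc j"] by (simp add: basis_sq_def)
qed simp

lemma basis_sq_sum:
  "basis_sq (length ts) = - of_int (ts ! 0) - (\<Sum>j=1..length ts - 1. basis_sq j / (\<Prod>k=1..j. basis_sq k)\<^sup>2)"
proof -
  have casoratian: "Z j * W (Suc j) - Z (Suc j) * W j = 1" for j
    using lin_rec_casoratian[of coeff 0 1 j "-1" 0] by simp
  have "basis_sq j / (\<Prod>k=1..j. basis_sq k)\<^sup>2 = W j / Z j - W (Suc j) / Z (Suc j)"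
    if "j \<in> {1..length ts - 1}" for j
  proof -
    have j: "j < length ts" using that by auto
    have "0 < Z j" "0 < Z (Suc j)" using Z_pos that by auto
    moreover have "(\<Prod>k=1..j. basis_sq k)\<^sup>2 = (Z (Suc j))\<^sup>2"
      using prod_basis_sq[OF j] by (cases "even j") simp_all
    moreover have "basis_sq j = - Z (Suc j) / Z j" using j by (simp add: basis_sq_def)
    ultimately show ?thesis
      using casoratian[of j] by (simp add: field_simps power2_eq_square)
  qed
  then have "(\<Sum>j=1..length ts - 1. basis_sq j / (\<Prod>k=1..j. basis_sq k)\<^sup>2)
      = - (\<Sum>j=1..length ts - 1. W (Suc j) / Z (Suc j) - W j / Z j)"
    by (simp add: sum_negf[symmetric])
  also have "\<dots> = - rho"
    using ts_nonempty by (subst sum_Suc_diff) (auto simp: rho_def Suc_le_eq)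
  finally show ?thesis by (simp add: basis_sq_def)
qed

end

lemma quotient_of_coprime_fraction:
  "0 < b \<Longrightarrow> coprime a b \<Longrightarrow> quotient_of (of_int a / of_int b) = (a, b)"
  by (simp add: Fract_of_int_quotient[symmetric] quotient_of_Fract)

lemma coprime_if_bezout: "u * a + v * b = (1::int) \<Longrightarrow> coprime a b"
  by (rule coprimeI) (metis dvd_add dvd_mult)

lemma T6_continuant_values:
  fixes q q\<^sub>1 q\<^sub>l q\<^sub>1\<^sub>l N a :: int
  assumes "a < N" and "0 < a" and "0 < q\<^sub>1" and "0 < q\<^sub>l" and "q\<^sub>l < q"
    and det: "q\<^sub>l * q\<^sub>1 - q * q\<^sub>1\<^sub>l = 1"
    and frac: "of_int q / of_int q\<^sub>1 = (of_int (6 * N\<^sup>2) / of_int (6 * N * a - 1) :: rat)"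
  shows "q = 6 * N\<^sup>2 \<and> q\<^sub>1 = 6 * N * a - 1 \<and> q\<^sub>l = 6 * N\<^sup>2 - 6 * N * a - 1
    \<and> q\<^sub>1\<^sub>l = 6 * N * a - 6 * a\<^sup>2 - 1"
proof -
  have "0 < N * a" using assms by simp
  then have pos: "0 < 6 * N * a - 1" by linarith
  have cop: "coprime (6 * N\<^sup>2) (6 * N * a - 1)"
    by (rule coprime_if_bezout[of "6 * a\<^sup>2" _ "- 6 * N * a - 1"]) (simp add: algebra_simps power2_eq_square)
  have "coprime q q\<^sub>1" by (rule coprime_if_bezout[of "- q\<^sub>1\<^sub>l" _ q\<^sub>l]) (use det in \<open>simp add: algebra_simps\<close>)
  then have "(q, q\<^sub>1) = (6 * N\<^sup>2, 6 * N * a - 1)"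
    using arg_cong[OF frac, of quotient_of] \<open>0 < q\<^sub>1\<close> pos cop
    by (simp only: quotient_of_coprime_fraction)
  then have q: "q = 6 * N\<^sup>2" and q1: "q\<^sub>1 = 6 * N * a - 1" by simp_all
  define Q where "Q = 6 * N\<^sup>2 - 6 * N * a - 1"
  have key: "(q\<^sub>l - Q) * (6 * N * a - 1) = 6 * N\<^sup>2 * (q\<^sub>1\<^sub>l - (6 * N * a - 6 * a\<^sup>2 - 1))"
    using det unfolding q q1 Q_def by (simp add: algebra_simps power2_eq_square)
  then have dvd: "6 * N\<^sup>2 dvd q\<^sub>l - Q"
    using cop by (metis coprime_dvd_mult_left_iff dvd_triv_left)
  have "0 < Q"
  proof -
    have "6 * N \<le> 6 * N * (N - a)" using assms by simp
    then show ?thesis unfolding Q_def using assms by (simp add: algebra_simps power2_eq_square)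
  qed
  have "Q < 6 * N\<^sup>2" unfolding Q_def using \<open>0 < N * a\<close> by simp
  have "q\<^sub>l = Q"
  proof (rule ccontr)
    assume "q\<^sub>l \<noteq> Q"
    then have "\<bar>6 * N\<^sup>2\<bar> \<le> \<bar>q\<^sub>l - Q\<bar>" using dvd by (intro dvd_imp_le_int) auto
    then show False using \<open>0 < Q\<close> \<open>Q < 6 * N\<^sup>2\<close> \<open>0 < q\<^sub>l\<close> \<open>q\<^sub>l < q\<close> q by auto
  qed
  moreover have "N\<^sup>2 \<noteq> 0" using assms by simp
  ultimately show ?thesis using key q q1 by (simp add: Q_def)
qed

lemma bar_3pow_neg_six_mul_square:
  fixes x s :: int
  assumes "x \<noteq> 0" and s: "[s = 2] (mod 3)"
  shows "\<exists>\<alpha>>0. odd \<alpha> \<and> bar_3pow 2 \<alpha> (of_int (- 6 * x\<^sup>2) / of_int s)"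
proof -
  obtain m where x: "x = 3 ^ multiplicity 3 x * m" and "\<not> 3 dvd m"
    using multiplicity_decompose'[of x 3] assms(1) by auto
  define \<beta> where "\<beta> = multiplicity 3 x"
  have "\<exists>j. m = 3 * j + 1 \<or> m = 3 * j + 2" using \<open>\<not> 3 dvd m\<close> by presburger
  then obtain j where "m = 3 * j + 1 \<or> m = 3 * j + 2" by blast
  then have "\<exists>k. m\<^sup>2 = 3 * k + 1"
  proof
    assume "m = 3 * j + 1"
    then show ?thesis by (intro exI[of _ "3 * j\<^sup>2 + 2 * j"]) (simp add: power2_eq_square algebra_simps)
  next
    assume "m = 3 * j + 2"
    then show ?thesis by (intro exI[of _ "3 * j\<^sup>2 + 4 * j + 1"]) (simp add: power2_eq_square algebra_simps)
  qed
  then obtain k where k: "m\<^sup>2 = 3 * k + 1" by blast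
  have s3: "s mod 3 = 2" using s by (simp add: cong_def)
  show ?thesis
  proof (intro exI conjI)
    show "0 < int (2 * \<beta> + 1)" "odd (int (2 * \<beta> + 1))" by simp_all
    show "bar_3pow 2 (int (2 * \<beta> + 1)) (of_int (- 6 * x\<^sup>2) / of_int s)"
      unfolding bar_3pow_def
    proof (rule exI[of _ "- 2 * m\<^sup>2"], rule exI[of _ s], intro conjI)
      show "s \<noteq> 0" "\<not> 3 dvd s" using s3 by auto
      show "\<not> 3 dvd - 2 * m\<^sup>2" unfolding k by presburger
      show "[- 2 * m\<^sup>2 = 2 * s] (mod 3)" using s3 unfolding k cong_def by presburger
      have "x\<^sup>2 = (3 ^ \<beta>)\<^sup>2 * m\<^sup>2"
        by (subst x) (simp add: \<beta>_def power_mult_distrib)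
      also have "(3 ^ \<beta>)\<^sup>2 = (3::int) ^ (2 * \<beta>)"
        by (simp add: power_mult[symmetric] mult.commute)
      finally have "- 6 * x\<^sup>2 = 3 ^ (2 * \<beta> + 1) * (- 2 * m\<^sup>2)"
        by simp
      then have "of_int (- 6 * x\<^sup>2) = (3::rat) ^ (2 * \<beta> + 1) * of_int (- 2 * m\<^sup>2)"
        by (metis of_int_mult of_int_numeral of_int_power)
      then show "of_int (- 6 * x\<^sup>2) / of_int s = (3::rat) powi int (2 * \<beta> + 1) * of_int (- 2 * m\<^sup>2) / of_int s"
        by (simp only: power_int_of_nat)
    qed
  qed
qed

lemma T6_bar_3pow:
  fixes q q\<^sub>1 q\<^sub>l q\<^sub>1\<^sub>l N a :: int
  assumes "a < N" and "0 < a" and "0 < q\<^sub>1" and "0 < q\<^sub>l" and "q\<^sub>l < q"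
    and "q\<^sub>l * q\<^sub>1 - q * q\<^sub>1\<^sub>l = 1"
    and "of_int q / of_int q\<^sub>1 = (of_int (6 * N\<^sup>2) / of_int (6 * N * a - 1) :: rat)"
  shows "\<exists>\<alpha>>0. odd \<alpha> \<and> bar_3pow 2 \<alpha> (-2 + of_int (q\<^sub>1 + q\<^sub>1\<^sub>l) / of_int (q + q\<^sub>l))"
proof -
  have q: "q = 6 * N\<^sup>2" and q1: "q\<^sub>1 = 6 * N * a - 1" and ql: "q\<^sub>l = 6 * N\<^sup>2 - 6 * N * a - 1"
    and q1l: "q\<^sub>1\<^sub>l = 6 * N * a - 6 * a\<^sup>2 - 1"
    using T6_continuant_values[OF assms] by auto
  have "0 < q + q\<^sub>l" using assms by simp
  then have "-2 + of_int (q\<^sub>1 + q\<^sub>1\<^sub>l) / of_int (q + q\<^sub>l)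
      = (of_int (q\<^sub>1 + q\<^sub>1\<^sub>l - 2 * (q + q\<^sub>l)) / of_int (q + q\<^sub>l) :: rat)"
    by (simp add: field_simps)
  also have "q\<^sub>1 + q\<^sub>1\<^sub>l - 2 * (q + q\<^sub>l) = - 6 * (2 * N - a)\<^sup>2"
    unfolding q q1 ql q1l by (simp add: algebra_simps power2_eq_square)
  finally have D: "-2 + of_int (q\<^sub>1 + q\<^sub>1\<^sub>l) / of_int (q + q\<^sub>l)
      = (of_int (- 6 * (2 * N - a)\<^sup>2) / of_int (q + q\<^sub>l) :: rat)" .
  have sum: "q + q\<^sub>l = 3 * (4 * N\<^sup>2 - 2 * N * a - 1) + 2"
    unfolding q ql by simp
  have "[q + q\<^sub>l = 2] (mod 3)" unfolding sum cong_def by (rule mod_mult_self4)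
  moreover have "2 * N - a \<noteq> 0" using assms by simp
  ultimately show ?thesis unfolding D by (rule bar_3pow_neg_six_mul_square[rotated])
qed

locale tau_lattice =
  fixes ns :: "int list"
  assumes ns_nonempty: "ns \<noteq> []" and ns_ge2: "\<forall>n\<in>set ns. n \<ge> 2"

sublocale tau_lattice \<subseteq> hj_lattice "tau ns"
proof
  have "last ns \<ge> 2" using ns_ge2 ns_nonempty by simp
  then show "\<forall>t\<in>set (tau ns). t \<ge> 2"
    using ns_ge2 by (auto simp: tau_def dest: in_set_butlastD)
qed (simp add: tau_def)

context tau_lattice
begin

abbreviation K :: "nat \<Rightarrow> int" where
  "K \<equiv> continuant (nth ns)"

abbreviation K_tail :: "nat \<Rightarrow> int" where
  "K_tail \<equiv> lin_rec (nth ns) (-1) 0"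

lemma length_tau: "length (tau ns) = Suc (length ns)"
  using ns_nonempty by (simp add: tau_def)

lemma tau_nth_0: "tau ns ! 0 = 2"
  by (simp add: tau_def)

lemma nth_tl_ns: "nth (tl ns) = (\<lambda>i. ns ! Suc i)"
  using ns_nonempty by (cases ns) auto

lemma coeff_tau:
  "i < length ns \<Longrightarrow> coeff i = of_int (((nth ns)(length ns - 1 := ns ! (length ns - 1) + 1)) i)"
  unfolding coeff_def using ns_nonempty
  by (auto simp: tau_def nth_append nth_butlast last_conv_nth)

lemma lin_rec_coeff:
  assumes "k \<le> Suc (length ns)"
  shows "lin_rec coeff (of_int a) (of_int b) k =
     of_int (lin_rec ((nth ns)(length ns - 1 := ns ! (length ns - 1) + 1)) a b k)"
proof -
  have "lin_rec coeff (of_int a) (of_int b) k =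
      lin_rec (\<lambda>i. of_int (((nth ns)(length ns - 1 := ns ! (length ns - 1) + 1)) i)) (of_int a) (of_int b) k"
    by (rule lin_rec_cong) (use assms in \<open>simp add: coeff_tau\<close>)
  then show ?thesis by (simp only: of_int_lin_rec)
qed

lemma lin_rec_coeff_prefix:
  assumes "k \<le> length ns"
  shows "lin_rec coeff (of_int a) (of_int b) k = of_int (lin_rec (nth ns) a b k)"
proof -
  have "lin_rec ((nth ns)(length ns - 1 := ns ! (length ns - 1) + 1)) a b k = lin_rec (nth ns) a b k"
    by (rule lin_rec_cong) (use assms in auto)
  then show ?thesis using lin_rec_coeff[of k] assms by simp
qed

lemma lin_rec_coeff_top:
  "lin_rec coeff (of_int a) (of_int b) (Suc (length ns)) =
     of_int (lin_rec (nth ns) a b (Suc (length ns)) + lin_rec (nth ns) a b (length ns))"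
proof -
  obtain p where p: "length ns = Suc p" using ns_nonempty by (cases ns) auto
  have "lin_rec coeff (of_int a) (of_int b) (Suc (length ns)) =
      of_int (lin_rec ((nth ns)(p := ns ! p + 1)) a b (Suc (Suc p)))"
    using lin_rec_coeff[of "Suc (length ns)" a b] p by (simp del: lin_rec.simps)
  then show ?thesis
    using lin_rec_incr_last[of "nth ns" p a b] p by (simp del: lin_rec.simps)
qed

lemma qq_eq: "qq ns = K (Suc (length ns))"
  using ns_ge2 by (simp add: qq_def abs_det_tri_mat)

lemma q_l_eq: "q_l ns = K (length ns)"
proof -
  obtain p where p: "length ns = Suc p" using ns_nonempty by (cases ns) auto
  have "\<forall>x\<in>set (butlast ns). x \<ge> 2" using ns_ge2 by (auto dest: in_set_butlastD)
  then have "q_l ns = continuant (nth (butlast ns)) (Suc p)"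
    unfolding q_l_def using abs_det_tri_mat[of "butlast ns"] p by simp
  then show ?thesis using p by (simp add: continuant_nth_butlast del: lin_rec.simps)
qed

lemma tl_ge2: "\<forall>x\<in>set (tl ns). x \<ge> 2"
  using ns_ge2 ns_nonempty by (auto dest: list.set_sel(2))

lemma q_1_eq: "q_1 ns = K_tail (Suc (length ns))"
proof -
  obtain p where p: "length ns = Suc p" using ns_nonempty by (cases ns) auto
  have "q_1 ns = continuant (nth (tl ns)) (Suc p)"
    unfolding q_1_def using abs_det_tri_mat[OF tl_ge2] p by simp
  then show ?thesis using p by (simp add: lin_rec_tail nth_tl_ns del: lin_rec.simps)
qed

lemma q_1l_eq: "q_1l ns = K_tail (length ns)"
proof (cases "length ns = 1")
  case False
  then obtain p where p: "length ns = Suc (Suc p)" using ns_nonempty by (cases ns) (auto simp: neq_Nil_conv)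
  have "\<forall>x\<in>set (butlast (tl ns)). x \<ge> 2" using tl_ge2 by (auto dest: in_set_butlastD)
  then have "q_1l ns = continuant (nth (butlast (tl ns))) (Suc p)"
    unfolding q_1l_def using abs_det_tri_mat[of "butlast (tl ns)"] p by simp
  then show ?thesis using p
    by (simp add: continuant_nth_butlast lin_rec_tail nth_tl_ns del: lin_rec.simps)
qed (simp add: q_1l_def)

lemma rho_eq: "rho = of_int (q_1 ns + q_1l ns) / of_int (qq ns + q_l ns)"
  using lin_rec_coeff_top[of 0 1] lin_rec_coeff_top[of "-1" 0]
  by (simp add: rho_def length_tau qq_eq q_l_eq q_1_eq q_1l_eq)

lemma basis_sq_eq_hjcf:
  assumes "j \<in> {1..length ns}"
  shows "basis_sq j = (if j = length ns then - hjcf (rev (take j ns)) - 1 else - hjcf (rev (take j ns)))"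
proof -
  have hjcf: "hjcf (rev (take j ns)) = of_int (K (Suc j)) / of_int (K j)"
    using hjcf_rev_take ns_ge2 assms by simp
  have "0 < K j" using continuant_pos[of j "nth ns"] ns_ge2 assms by auto
  have "Z j = of_int (K j)" using lin_rec_coeff_prefix[of j 0 1] assms by simp
  moreover have "Z (Suc j) = of_int (K (Suc j) + (if j = length ns then K j else 0))"
    using lin_rec_coeff_prefix[of "Suc j" 0 1] lin_rec_coeff_top[of 0 1] assms
    by (cases "j = length ns") simp_all
  ultimately have "basis_sq j = - of_int (K (Suc j) + (if j = length ns then K j else 0)) / of_int (K j)"
    using assms by (simp add: basis_sq_def length_tau)
  also have "\<dots> = (if j = length ns then - hjcf (rev (take j ns)) - 1 else - hjcf (rev (take j ns)))"
    unfolding hjcf using \<open>0 < K j\<close> by (cases "j = length ns") (simp_all add: field_simps)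
  finally show ?thesis .
qed

lemma hjcf_eq: "hjcf ns = of_int (qq ns) / of_int (q_1 ns)"
  using hjcf_continuant[OF ns_nonempty ns_ge2] ns_nonempty
  by (simp add: qq_eq q_1_eq lin_rec_tail nth_tl_ns del: lin_rec.simps)

lemma bar_3pow_of_in_T6: "in_T6 ns \<Longrightarrow> \<exists>\<alpha>>0. odd \<alpha> \<and> bar_3pow 2 \<alpha> (rho - 2)"
proof -
  assume "in_T6 ns"
  then obtain N a :: int where "a < N" "0 < a"
    and frac: "hjcf ns = of_int (6 * N\<^sup>2) / of_int (6 * N * a - 1)"
    unfolding in_T6_def by blast
  have "0 < q_1 ns"
    using continuant_pos[of "length ns" "\<lambda>i. ns ! Suc i"] ns_ge2 ns_nonempty
    by (auto simp: q_1_eq lin_rec_tail)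
  moreover have "0 < q_l ns"
    using continuant_pos[of "length ns" "nth ns"] ns_ge2 ns_nonempty by (auto simp: q_l_eq)
  moreover have "q_l ns < qq ns"
    using continuant_less_Suc[of "length ns" "nth ns"] ns_ge2 by (auto simp: q_l_eq qq_eq)
  moreover have "q_l ns * q_1 ns - qq ns * q_1l ns = 1"
    using lin_rec_casoratian[of "nth ns" 0 1 "length ns" "-1" 0]
    by (simp add: q_l_eq q_1_eq qq_eq q_1l_eq)
  ultimately show ?thesis
    using T6_bar_3pow[OF \<open>a < N\<close> \<open>0 < a\<close>] frac by (simp add: rho_eq hjcf_eq)
qed

end

theorem lemma6p5:
  fixes ns :: "int list"
  assumes "ns \<noteq> []" and "\<forall>n\<in>set ns. n \<ge> 2"
  defines "l \<equiv> length ns"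
  defines "c \<equiv> (\<lambda>i::nat. - hjcf (rev (take i ns)))"
  defines "d \<equiv> (\<lambda>i::nat. if i = l then c l - 1 else c i)"
  defines "D \<equiv> -2 - (\<Sum>j=1..l. d j / (\<Prod>k=1..j. d k)^2)"
  shows "(\<exists>v. orth_basis (tau ns) v (\<lambda>i. if i = l + 1 then D else d i))
       \<and> D = -2 + of_int (q_1 ns + q_1l ns) / of_int (qq ns + q_l ns)
       \<and> (in_T6 ns \<longrightarrow> (\<exists>\<alpha>::int. \<alpha> > 0 \<and> odd \<alpha> \<and> bar_3pow 2 \<alpha> D))"
proof -
  interpret tau_lattice ns using assms(1,2) by unfold_locales
  have d: "d j = basis_sq j" if "j \<in> {1..l}" for j
    using basis_sq_eq_hjcf[of j] that by (auto simp: d_def c_def l_def)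
  have "(\<Sum>j=1..l. d j / (\<Prod>k=1..j. d k)^2) = (\<Sum>j=1..l. basis_sq j / (\<Prod>k=1..j. basis_sq k)^2)"
  proof (rule sum.cong)
    fix j assume "j \<in> {1..l}"
    moreover have "(\<Prod>k=1..j. d k) = (\<Prod>k=1..j. basis_sq k)"
      using calculation by (intro prod.cong) (auto simp: d)
    ultimately show "d j / (\<Prod>k=1..j. d k)^2 = basis_sq j / (\<Prod>k=1..j. basis_sq k)^2"
      by (simp add: d)
  qed simp
  then have D_sq: "D = basis_sq (length (tau ns))"
    using basis_sq_sum by (simp add: D_def l_def length_tau tau_nth_0)
  then have D: "D = rho - 2" by (simp add: basis_sq_def tau_nth_0)
  have "orth_basis (tau ns) basis_vec (\<lambda>i. if i = l + 1 then D else d i)"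
    using orth_basis by (rule orth_basis_cong) (auto simp: d D_sq l_def length_tau)
  then show ?thesis
    using D rho_eq bar_3pow_of_in_T6 by auto
qed

end
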